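(* Let $\mathcal{D}_N$ denote the set of integer vectors $(f_0,\dots,f_6)\in\mathbb{Z}^7$ with $|f_j|\le N$ for all $j$ such that the binary sextic form $F(x,z)=\sum_{j=0}^6 f_jx^jz^{6-j}$ is not squarefree (i.e. $F=0$ or $F$ is divisible in $\mathbb{Z}[x,z]$ by the square of a non-constant form). Then $\#\mathcal{D}_N\asymp N^5$ as $N\to\infty$, i.e. there are constants $0<c_1<c_2$ with $c_1N^5\le\#\mathcal{D}_N\le c_2N^5$ for all $N\ge1$. Consequently the number $\#\mathcal{C}_N=(2N+1)^7-\#\mathcal{D}_N$ of squarefree such forms satisfies $\#\mathcal{C}_N=(2N)^7(1+O(N^{-1}))$.
   Context: $\mathcal{C}_N$ is the set of integer vectors $(f_0,\dots,f_6)$ with $|f_j|\le N$ for which $F(x,z)=\sum_j f_jx^jz^{6-j}$ is a nonzero squarefree binary sextic form; these correspond to genus-2 curves $y^2=F(x,z)$ in the weighted projective plane with weights $1,3,1$ for $x,y,z$. *)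

theory Defs
  imports "HOL-Computational_Algebra.Polynomial"
begin

text \<open>Bivariate integer polynomials Z[x,z] are represented as int poly poly:
  the outer variable is z, the inner variable is x.  So coeff (coeff G i) j
  is the coefficient of x^j z^i.\<close>

definition hom_form :: "nat \<Rightarrow> int poly poly \<Rightarrow> bool" where
  "hom_form d G \<longleftrightarrow> (\<forall>i j. coeff (coeff G i) j \<noteq> 0 \<longrightarrow> i + j = d)"

definition nonconst_form :: "int poly poly \<Rightarrow> bool" where
  "nonconst_form G \<longleftrightarrow> G \<noteq> 0 \<and> (\<exists>d\<ge>1. hom_form d G)"

definition sextic_form :: "int list \<Rightarrow> int poly poly" where
  "sextic_form fs = (\<Sum>j<7. monom (monom (fs ! j) j) (6 - j))"

definition squarefree_form :: "int poly poly \<Rightarrow> bool" where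
  "squarefree_form F \<longleftrightarrow> F \<noteq> 0 \<and> \<not> (\<exists>G. nonconst_form G \<and> G ^ 2 dvd F)"

definition box :: "nat \<Rightarrow> int list set" where
  "box N = {fs. length fs = 7 \<and> (\<forall>j<7. \<bar>fs ! j\<bar> \<le> int N)}"

definition D_set :: "nat \<Rightarrow> int list set" where
  "D_set N = {fs \<in> box N. \<not> squarefree_form (sextic_form fs)}"

definition C_set :: "nat \<Rightarrow> int list set" where
  "C_set N = {fs \<in> box N. squarefree_form (sextic_form fs)}"

end

theory Submission
  imports Defs "Berlekamp_Zassenhaus.Factor_Bound"
begin

(* A sextic form F(x,z) that is not squarefree is either zero, or divisible by z^2
   (its two top coefficients f_5, f_6 vanish), or its dehomogenisation p(x) = F(x,1)
   has a repeated factor, p = g^2 h with deg g >= 1.  The first two cases contribute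
   at most 1 + (2N+1)^5 vectors.  For the third we bound the coefficients of g and h
   through Mahler measures: M(p) <= sqrt 7 * N (Landau), M is multiplicative and
   bounds each coefficient up to a binomial factor (Mignotte).  If m is the largest
   coefficient of g, then m^2 <= 192 N and all coefficients of h are at most
   3072 N / m^2, so the number of such p is O(sum_m m^4 (N/m^2)^5) = O(N^5).
   Conversely all forms with f_0 = f_1 = 0 are divisible by x^2, giving at least
   (2N+1)^5 non-squarefree forms.  The estimate for the squarefree forms follows
   since the box has (2N+1)^7 = (2N)^7 + O(N^6) elements. *)

definition dehom :: "int list \<Rightarrow> int poly" where
  "dehom fs = (\<Sum>j<7. Polynomial.monom (fs ! j) j)"

lemma coeff_dehom: "poly.coeff (dehom fs) k = (if k < 7 then fs ! k else 0)"
  unfolding dehom_def by (simp add: coeff_sum coeff_monom)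

lemma sextic_form_at_1: "poly (sextic_form fs) 1 = dehom fs"
  unfolding sextic_form_def dehom_def by (simp add: poly_sum poly_monom)

lemma degree_dehom: "degree (dehom fs) \<le> 6"
  by (rule degree_le) (simp add: coeff_dehom)

lemma dehom_eq_iff:
  assumes "length fs = 7" "length gs = 7"
  shows "dehom fs = dehom gs \<longleftrightarrow> fs = gs"
proof
  assume e: "dehom fs = dehom gs"
  show "fs = gs"
  proof (rule nth_equalityI)
    fix i assume "i < length fs"
    thus "fs ! i = gs ! i" using arg_cong[OF e, of "\<lambda>p. poly.coeff p i"] assms
      by (simp add: coeff_dehom)
  qed (use assms in simp)
qed simp

lemma dehom_replicate_0: "dehom (replicate 7 0) = 0"
  unfolding dehom_def by (simp add: nth_replicate)

lemma coeff_sextic_form_z0: "poly.coeff (sextic_form fs) 0 = Polynomial.monom (fs ! 6) 6"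
  and coeff_sextic_form_z1: "poly.coeff (sextic_form fs) 1 = Polynomial.monom (fs ! 5) 5"
  unfolding sextic_form_def by (simp_all add: coeff_sum coeff_monom eval_nat_numeral lessThan_Suc)

lemma hom_form_coeff_at_1:
  assumes "hom_form d G"
  shows "poly.coeff (poly G 1) d = poly.coeff (poly.coeff G 0) d"
proof -
  have "poly.coeff (poly G 1) d = (\<Sum>i\<le>degree G. poly.coeff (poly.coeff G i) d)"
    by (simp add: poly_altdef coeff_sum)
  also have "\<dots> = (\<Sum>i\<le>degree G. if i = 0 then poly.coeff (poly.coeff G 0) d else 0)"
    using assms unfolding hom_form_def by (intro sum.cong) (auto, metis add_cancel_right_left less_irrefl)
  finally show ?thesis by simp
qed

lemma nonconst_form_at_1_constant:
  assumes "nonconst_form G" "degree (poly G 1) = 0"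
  shows "poly.coeff G 0 = 0"
proof -
  obtain d where d: "d \<ge> 1" "hom_form d G" using assms(1) by (auto simp: nonconst_form_def)
  have "poly.coeff (poly.coeff G 0) j = 0" for j
  proof (cases "j = d")
    case True
    have "poly.coeff (poly G 1) d = 0" using assms(2) d(1) by (simp add: coeff_eq_0)
    thus ?thesis using hom_form_coeff_at_1[OF d(2)] True by simp
  next
    case False thus ?thesis using d(2) unfolding hom_form_def by (metis add_0)
  qed
  thus ?thesis by (simp add: poly_eq_iff)
qed

lemma not_squarefree_cases:
  assumes "length fs = 7" "\<not> squarefree_form (sextic_form fs)"
  shows "fs = replicate 7 0 \<or> (fs ! 5 = 0 \<and> fs ! 6 = 0) \<or>
         (dehom fs \<noteq> 0 \<and> (\<exists>g h. degree g \<ge> 1 \<and> dehom fs = g ^ 2 * h))"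
proof (cases "dehom fs = 0")
  case True
  thus ?thesis using dehom_eq_iff[OF assms(1), of "replicate 7 0"] dehom_replicate_0 by simp
next
  case False
  hence "sextic_form fs \<noteq> 0" using sextic_form_at_1[of fs] by auto
  then obtain G K where G: "nonconst_form G" and K: "sextic_form fs = G ^ 2 * K"
    using assms(2) by (auto simp: squarefree_form_def elim: dvdE)
  show ?thesis
  proof (cases "degree (poly G 1) = 0")
    case False
    have "dehom fs = (poly G 1) ^ 2 * poly K 1"
      using K sextic_form_at_1[of fs] by (simp add: poly_mult poly_power)
    thus ?thesis using False \<open>dehom fs \<noteq> 0\<close> by (metis less_one not_le)
  next
    case True
    have G0: "poly.coeff G 0 = 0" using nonconst_form_at_1_constant[OF G True] .
    have "poly.coeff (sextic_form fs) 0 = 0" "poly.coeff (sextic_form fs) 1 = 0"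
      unfolding K by (simp_all add: power2_eq_square coeff_mult G0 mult.assoc)
    thus ?thesis using coeff_sextic_form_z0[of fs] coeff_sextic_form_z1[of fs] by simp
  qed
qed

definition poly_height :: "int poly \<Rightarrow> nat" where
  "poly_height g = Max (insert 0 ((\<lambda>c. nat \<bar>c\<bar>) ` set (coeffs g)))"

lemma coeff_le_poly_height: "\<bar>poly.coeff g k\<bar> \<le> int (poly_height g)"
proof (cases "g \<noteq> 0 \<and> k \<le> degree g")
  case True
  hence "nat \<bar>poly.coeff g k\<bar> \<le> poly_height g"
    unfolding poly_height_def by (intro Max_ge) (auto intro: coeff_in_coeffs)
  thus ?thesis by linarith
next
  case False
  hence "poly.coeff g k = 0" by (auto simp: coeff_eq_0)
  thus ?thesis by simp
qed

lemma poly_height_attained: "\<exists>k. int (poly_height g) = \<bar>poly.coeff g k\<bar>"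
proof (cases "poly_height g = 0")
  case True
  thus ?thesis by (intro exI[of _ "Suc (degree g)"]) (simp add: coeff_eq_0)
next
  case False
  have "poly_height g \<in> insert 0 ((\<lambda>c. nat \<bar>c\<bar>) ` set (coeffs g))"
    unfolding poly_height_def by (rule Max_in) auto
  then obtain c where c: "c \<in> set (coeffs g)" "poly_height g = nat \<bar>c\<bar>" using False by auto
  moreover have "\<exists>k. c = poly.coeff g k" using c(1) by (auto simp: coeffs_def split: if_splits)
  ultimately show ?thesis by auto
qed

lemma poly_height_pos:
  assumes "g \<noteq> 0" shows "1 \<le> poly_height g"
proof -
  have "0 < \<bar>lead_coeff g\<bar>" using assms by simp
  thus ?thesis using coeff_le_poly_height[of g "degree g"] by linarith
qed

lemma mahler_measure_mult: "mahler_measure (f * g) = mahler_measure f * mahler_measure g"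
  unfolding mahler_measure_def of_int_poly_hom.hom_mult measure_eq_prod ..

lemma coeff_le_mahler_measure:
  fixes g :: "int poly" assumes "degree g \<le> n"
  shows "real_of_int \<bar>poly.coeff g k\<bar> \<le> 2 ^ n * mahler_measure g"
proof -
  have "real (degree g choose k) \<le> real (2 ^ degree g)"
    by (simp only: of_nat_le_iff binomial_le_pow2)
  also have "\<dots> = 2 ^ degree g" by simp
  also have "(2::real) ^ degree g \<le> 2 ^ n" using assms by (simp add: power_increasing)
  finally have "real (degree g choose k) * mahler_measure g \<le> 2 ^ n * mahler_measure g"
    by (rule mult_right_mono) (rule mahler_measure_ge_0)
  with Mignotte_bound[of g k] show ?thesis by linarith
qed

lemma mahler_measure_le_coeff_bound:
  fixes p :: "int poly"
  assumes "degree p \<le> n" and "\<forall>k. \<bar>poly.coeff p k\<bar> \<le> B"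
  shows "mahler_measure p \<le> sqrt (real (n + 1)) * real_of_int B"
proof -
  have B0: "0 \<le> B" using assms(2) abs_ge_zero order_trans by blast
  have len: "length (coeffs p) \<le> n + 1"
    using assms(1) length_coeffs_degree[of p] by (cases "p = 0") auto
  have sq: "c * c \<le> B * B" if "c \<in> set (coeffs p)" for c
  proof -
    have "\<bar>c\<bar> \<le> B"
      using that forall_coeffs_conv[of "\<lambda>c. \<bar>c\<bar> \<le> B" p] assms(2) B0 by simp
    thus ?thesis using mult_mono[of "\<bar>c\<bar>" B "\<bar>c\<bar>" B] by (simp add: abs_mult_self_eq)
  qed
  have "(\<Sum>c\<leftarrow>coeffs p. c * c) \<le> (\<Sum>c\<leftarrow>coeffs p. B * B)"
    using sq by (rule sum_list_mono)
  also have "\<dots> = int (length (coeffs p)) * (B * B)" by (simp add: sum_list_triv)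
  also have "\<dots> \<le> int (n + 1) * (B * B)" using len by (intro mult_right_mono) simp_all
  finally have "real_of_int (\<Sum>c\<leftarrow>coeffs p. c * c) \<le> real_of_int (int (n + 1) * (B * B))"
    by (simp only: of_int_le_iff)
  also have "\<dots> = real (n + 1) * (real_of_int B)^2" by (simp add: power2_eq_square)
  finally have "real_of_int (\<Sum>c\<leftarrow>coeffs p. c * c) \<le> real (n + 1) * (real_of_int B)^2" .
  hence "sqrt (real_of_int (\<Sum>c\<leftarrow>coeffs p. c * c)) \<le> sqrt (real (n + 1) * (real_of_int B)^2)"
    by (rule real_sqrt_le_mono)
  also have "\<dots> = sqrt (real (n + 1)) * real_of_int B" using B0 by (simp add: real_sqrt_mult)
  finally have "sqrt (real_of_int (\<Sum>c\<leftarrow>coeffs p. c * c)) \<le> sqrt (real (n + 1)) * real_of_int B" .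
  with Landau_inequality_mahler_measure[of p] show ?thesis by linarith
qed

lemma poly_height_le_mahler_measure:
  "real (poly_height f) \<le> 2 ^ degree f * mahler_measure f"
proof -
  obtain k where k: "int (poly_height f) = \<bar>poly.coeff f k\<bar>" using poly_height_attained by blast
  have "real (poly_height f) = real_of_int (int (poly_height f))" by simp
  also have "\<dots> = real_of_int \<bar>poly.coeff f k\<bar>" by (simp only: k)
  also have "\<dots> \<le> 2 ^ degree f * mahler_measure f" by (rule coeff_le_mahler_measure) simp
  finally show ?thesis .
qed

(* The heights of g and h are controlled by the Mahler measure of g^2 h, using
   multiplicativity and M(h) >= 1. *)
lemma poly_height_square_factor:
  fixes g h :: "int poly"
  assumes "h \<noteq> 0"
  shows "real (poly_height g)^2 \<le> 4 ^ degree g * mahler_measure (g^2 * h)"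
    and "real (poly_height g)^2 * real (poly_height h) \<le>
           4 ^ degree g * 2 ^ degree h * mahler_measure (g^2 * h)"
proof -
  have four: "(2 ^ degree g)^2 = (4::real) ^ degree g"
    by (metis power_mult_distrib power2_eq_square num_double numeral_times_numeral)
  have "real (poly_height g)^2 \<le> (2 ^ degree g * mahler_measure g)^2"
    by (rule power_mono[OF poly_height_le_mahler_measure]) simp
  hence Mg: "real (poly_height g)^2 \<le> 4 ^ degree g * mahler_measure g ^ 2"
    by (simp only: power_mult_distrib four)
  have Mh: "1 \<le> mahler_measure h" using assms mahler_measure_poly_ge_1 by blast
  have M: "mahler_measure (g^2 * h) = mahler_measure g ^ 2 * mahler_measure h"
    by (simp add: mahler_measure_mult power2_eq_square)
  have "4 ^ degree g * mahler_measure g ^ 2 * 1 \<le> 4 ^ degree g * mahler_measure g ^ 2 * mahler_measure h"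
    by (rule mult_left_mono[OF Mh]) simp
  thus "real (poly_height g)^2 \<le> 4 ^ degree g * mahler_measure (g^2 * h)"
    using Mg unfolding M by (simp only: mult_1_right mult.assoc)
  have "real (poly_height g)^2 * real (poly_height h) \<le>
          (4 ^ degree g * mahler_measure g ^ 2) * (2 ^ degree h * mahler_measure h)"
    by (rule mult_mono[OF Mg poly_height_le_mahler_measure]) simp_all
  also have "\<dots> = 4 ^ degree g * 2 ^ degree h * mahler_measure (g^2 * h)"
    unfolding M by (simp only: mult_ac)
  finally show "real (poly_height g)^2 * real (poly_height h) \<le>
                  4 ^ degree g * 2 ^ degree h * mahler_measure (g^2 * h)" .
qed

lemma sextic_square_factor_bounds:
  fixes p g h :: "int poly"
  assumes p0: "p \<noteq> 0" and pgh: "p = g ^ 2 * h" and dg1: "1 \<le> degree g"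
    and dp: "degree p \<le> 6" and cb: "\<forall>k. \<bar>poly.coeff p k\<bar> \<le> int N"
  shows "degree g \<le> 3 \<and> degree h \<le> 4 \<and> 1 \<le> poly_height g \<and> poly_height g ^ 2 \<le> 192 * N
         \<and> poly_height h \<le> 3072 * N div poly_height g ^ 2"
proof -
  have g0: "g \<noteq> 0" and h0: "h \<noteq> 0" using p0 pgh by auto
  have "degree p = 2 * degree g + degree h"
    unfolding pgh using g0 h0 by (simp add: degree_mult_eq degree_power_eq)
  hence dg: "degree g \<le> 3" and dh: "degree h \<le> 4" using dp dg1 by auto
  have sqrt7: "sqrt 7 \<le> 3" using real_sqrt_le_mono[of 7 9] by simp
  have "mahler_measure p \<le> sqrt (real (6 + 1)) * real_of_int (int N)"
    by (rule mahler_measure_le_coeff_bound[OF dp cb])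
  also have "\<dots> \<le> 3 * real N" using mult_right_mono[OF sqrt7, of "real N"] by simp
  finally have Mp: "mahler_measure p \<le> 3 * real N" .
  have c4: "(4::real) ^ degree g \<le> 64" using power_increasing[OF dg, of "4::real"] by simp
  have c2: "(2::real) ^ degree h \<le> 16" using power_increasing[OF dh, of "2::real"] by simp
  define m where "m = poly_height g"
  have m1: "1 \<le> m" unfolding m_def using poly_height_pos[OF g0] .
  have "real m ^ 2 \<le> 4 ^ degree g * mahler_measure p"
    unfolding m_def pgh by (rule poly_height_square_factor(1)[OF h0])
  also have "\<dots> \<le> 64 * (3 * real N)" by (rule mult_mono[OF c4 Mp]) (simp_all add: mahler_measure_ge_0)
  finally have "real (m ^ 2) \<le> real (192 * N)" by simp
  hence A: "m ^ 2 \<le> 192 * N" by (simp only: of_nat_le_iff)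
  have "real m ^ 2 * real (poly_height h) \<le> 4 ^ degree g * 2 ^ degree h * mahler_measure p"
    unfolding m_def pgh by (rule poly_height_square_factor(2)[OF h0])
  also have "\<dots> \<le> (64 * 16) * (3 * real N)"
    by (rule mult_mono[OF mult_mono[OF c4 c2] Mp]) (simp_all add: mahler_measure_ge_0)
  finally have "real (poly_height h * m ^ 2) \<le> real (3072 * N)" by (simp add: mult.commute)
  hence "poly_height h * m ^ 2 \<le> 3072 * N" by (simp only: of_nat_le_iff)
  hence B: "poly_height h \<le> 3072 * N div m ^ 2" using m1 by (simp add: less_eq_div_iff_mult_less_eq)
  show ?thesis using dg dh m1 A B unfolding m_def by blast
qed

definition height_box :: "nat \<Rightarrow> nat \<Rightarrow> int poly set" where
  "height_box n b = {h. degree h \<le> n \<and> poly_height h \<le> b}"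

lemma card_int_interval: "card {-int b..int b} = 2 * b + 1"
proof -
  have "card {-int b..int b} = nat (int (2 * b + 1))" by simp
  thus ?thesis by (simp only: nat_int)
qed

lemma height_box_finite_card:
  shows "finite (height_box n b)" and "card (height_box n b) \<le> (2 * b + 1) ^ (n + 1)"
proof -
  define f where "f = (\<lambda>h::int poly. restrict (poly.coeff h) {..n})"
  define P where "P = PiE {..n} (\<lambda>_. {-int b..int b})"
  have inj: "inj_on f (height_box n b)"
  proof (rule inj_onI)
    fix g h assume g: "g \<in> height_box n b" and h: "h \<in> height_box n b" and e: "f g = f h"
    show "g = h"
    proof (rule poly_eqI)
      fix k show "poly.coeff g k = poly.coeff h k"
      proof (cases "k \<le> n")
        case True thus ?thesis using fun_cong[OF e, of k] by (simp add: f_def)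
      next
        case False thus ?thesis using g h by (auto simp: height_box_def coeff_eq_0)
      qed
    qed
  qed
  have sub: "f ` height_box n b \<subseteq> P"
  proof
    fix y assume "y \<in> f ` height_box n b"
    then obtain h where h: "poly_height h \<le> b" and y: "y = f h" by (auto simp: height_box_def)
    have "poly.coeff h k \<in> {-int b..int b}" for k
      using coeff_le_poly_height[of h k] h by (auto simp: abs_le_iff)
    thus "y \<in> P" unfolding y f_def P_def by auto
  qed
  have fP: "finite P" unfolding P_def by (simp add: finite_PiE)
  have "card P = (\<Prod>i\<in>{..n}. card {-int b..int b})" unfolding P_def by (rule card_PiE) simp
  also have "\<dots> = (2 * b + 1) ^ (n + 1)"
    by (simp only: card_int_interval prod_constant card_atMost Suc_eq_plus1)
  finally have cP: "card P = (2 * b + 1) ^ (n + 1)" .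
  show "finite (height_box n b)" and "card (height_box n b) \<le> (2 * b + 1) ^ (n + 1)"
    using inj_on_finite[OF inj sub fP] card_inj_on_le[OF inj sub fP] cP by simp_all
qed

lemma sum_inverse_squares: "(\<Sum>m\<in>{1..n}. 1 / (real m)^2) \<le> 2 - 1 / real (max n 1)"
proof (induction n)
  case 0 thus ?case by simp
next
  case (Suc n)
  show ?case
  proof (cases "n = 0")
    case True thus ?thesis by simp
  next
    case False
    have "1 / (real (Suc n))^2 \<le> 1 / (real n * real (Suc n))"
      using False by (intro divide_left_mono) (auto simp: power2_eq_square)
    also have "\<dots> = 1 / real n - 1 / real (Suc n)" using False by (simp add: field_simps)
    finally show ?thesis using Suc False by simp
  qed
qed

(* The number of pairs (g, h) attached to the height m of g is O(N^5 / m^2),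
   which is summable over m. *)
lemma fiber_size_bound:
  assumes m1: "1 \<le> m" and mN: "m ^ 2 \<le> 192 * N"
  shows "real ((2 * m + 1) ^ 4 * (2 * (3072 * N div m ^ 2) + 1) ^ 5)
           \<le> 81 * 6336 ^ 5 * real N ^ 5 / (real m)^2"
proof -
  define x where "x = real m"
  have x1: "x \<ge> 1" using m1 by (simp add: x_def)
  have x2p: "x^2 > 0" using x1 by simp
  have "real (m ^ 2) \<le> real (192 * N)" using mN by (simp only: of_nat_le_iff)
  hence one: "1 \<le> 192 * real N / x^2" using x2p by (simp add: x_def field_simps)
  have div: "real (3072 * N div m ^ 2) \<le> 3072 * real N / x^2"
    using of_nat_div_le_of_nat[of "3072 * N" "m ^ 2"] by (simp add: x_def)
  have "real (2 * (3072 * N div m ^ 2) + 1) = 2 * real (3072 * N div m ^ 2) + 1" by simp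
  also have "\<dots> \<le> 2 * (3072 * real N / x^2) + 192 * real N / x^2" using one div by linarith
  also have "\<dots> = 6336 * real N / x^2" by (simp add: field_simps)
  finally have Y: "real (2 * (3072 * N div m ^ 2) + 1) \<le> 6336 * real N / x^2" .
  have "real ((2 * m + 1) ^ 4) = (2 * x + 1) ^ 4" by (simp add: x_def add.commute)
  also have "\<dots> \<le> (3 * x) ^ 4" using x1 by (intro power_mono) auto
  finally have X: "real ((2 * m + 1) ^ 4) \<le> 81 * x ^ 4" by (simp add: power_mult_distrib)
  have "real ((2 * m + 1) ^ 4 * (2 * (3072 * N div m ^ 2) + 1) ^ 5)
          = real ((2 * m + 1) ^ 4) * (real (2 * (3072 * N div m ^ 2) + 1)) ^ 5" by simp
  also have "\<dots> \<le> (81 * x ^ 4) * (6336 * real N / x^2) ^ 5"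
    by (intro mult_mono X power_mono Y) auto
  also have "\<dots> = 81 * 6336 ^ 5 * real N ^ 5 / x ^ 6"
    using x2p by (simp add: field_simps power_mult_distrib)
  also have "\<dots> \<le> 81 * 6336 ^ 5 * real N ^ 5 / x ^ 2"
    using x1 x2p by (intro divide_left_mono power_increasing) auto
  finally show ?thesis by (simp add: x_def)
qed

lemma positive_square_le_subset: "{m::nat. 1 \<le> m \<and> m ^ 2 \<le> K} \<subseteq> {1..K}"
proof
  fix m assume "m \<in> {m::nat. 1 \<le> m \<and> m ^ 2 \<le> K}"
  moreover have "m \<le> m ^ 2" by (simp add: power2_eq_square)
  ultimately show "m \<in> {1..K}" by simp
qed

definition bounded_lists :: "nat \<Rightarrow> nat \<Rightarrow> int list set" where
  "bounded_lists N n = {xs. set xs \<subseteq> {-int N..int N} \<and> length xs = n}"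

lemma bounded_lists_finite: "finite (bounded_lists N n)"
  unfolding bounded_lists_def by (rule finite_lists_length_eq) simp

lemma card_bounded_lists: "card (bounded_lists N n) = (2 * N + 1) ^ n"
  unfolding bounded_lists_def
  using card_lists_length_eq[of "{-int N..int N}" n] by (simp only: card_int_interval finite_atLeastAtMost_int)

lemma box_eq_bounded_lists: "box N = bounded_lists N 7"
proof -
  have "(\<forall>j<7. \<bar>xs ! j\<bar> \<le> int N) \<longleftrightarrow> set xs \<subseteq> {-int N..int N}" if "length xs = 7" for xs
    unfolding subset_code(1) all_set_conv_all_nth using that by (auto simp: abs_le_iff)
  thus ?thesis unfolding box_def bounded_lists_def by blast
qed

lemma coeff_dehom_box: "fs \<in> box N \<Longrightarrow> \<bar>poly.coeff (dehom fs) k\<bar> \<le> int N"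
  by (auto simp: coeff_dehom box_def)

definition square_factor_vectors :: "nat \<Rightarrow> int list set" where
  "square_factor_vectors N =
     {fs \<in> box N. dehom fs \<noteq> 0 \<and> (\<exists>g h. 1 \<le> degree g \<and> dehom fs = g ^ 2 * h)}"

lemma dehom_square_factor_vectors:
  "dehom ` square_factor_vectors N \<subseteq> (\<lambda>(g, h). g ^ 2 * h) `
     (\<Union>m\<in>{m. 1 \<le> m \<and> m ^ 2 \<le> 192 * N}. height_box 3 m \<times> height_box 4 (3072 * N div m ^ 2))"
proof
  fix p assume "p \<in> dehom ` square_factor_vectors N"
  then obtain fs g h where fs: "fs \<in> box N" "dehom fs \<noteq> 0" "1 \<le> degree g" "dehom fs = g ^ 2 * h"
    and p: "p = dehom fs" by (auto simp: square_factor_vectors_def)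
  have "degree g \<le> 3 \<and> degree h \<le> 4 \<and> 1 \<le> poly_height g \<and> poly_height g ^ 2 \<le> 192 * N
         \<and> poly_height h \<le> 3072 * N div poly_height g ^ 2"
    using coeff_dehom_box[OF fs(1)] by (intro sextic_square_factor_bounds[OF fs(2,4,3) degree_dehom]) simp
  hence "(g, h) \<in> (\<Union>m\<in>{m. 1 \<le> m \<and> m ^ 2 \<le> 192 * N}.
                     height_box 3 m \<times> height_box 4 (3072 * N div m ^ 2))"
    by (auto simp: height_box_def)
  thus "p \<in> (\<lambda>(g, h). g ^ 2 * h) ` (\<Union>m\<in>{m. 1 \<le> m \<and> m ^ 2 \<le> 192 * N}.
                     height_box 3 m \<times> height_box 4 (3072 * N div m ^ 2))"
    using p fs(4) by force
qed

lemma card_square_factor_vectors_sum: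
  "card (square_factor_vectors N)
     \<le> (\<Sum>m\<in>{m. 1 \<le> m \<and> m ^ 2 \<le> 192 * N}. (2 * m + 1) ^ 4 * (2 * (3072 * N div m ^ 2) + 1) ^ 5)"
proof -
  define I where "I = {m::nat. 1 \<le> m \<and> m ^ 2 \<le> 192 * N}"
  define T where "T = (\<Union>m\<in>I. height_box 3 m \<times> height_box 4 (3072 * N div m ^ 2))"
  have fI: "finite I" unfolding I_def using positive_square_le_subset finite_subset by blast
  have fT: "finite T" unfolding T_def using fI height_box_finite_card(1) by auto
  have "inj_on dehom (square_factor_vectors N)"
    by (rule inj_onI) (auto simp: square_factor_vectors_def box_def dehom_eq_iff)
  hence "card (square_factor_vectors N) = card (dehom ` square_factor_vectors N)"
    by (simp add: card_image)
  also have "\<dots> \<le> card ((\<lambda>(g, h). g ^ 2 * h) ` T)"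
    using dehom_square_factor_vectors fT unfolding T_def I_def by (intro card_mono) auto
  also have "\<dots> \<le> card T" by (rule card_image_le[OF fT])
  also have "\<dots> \<le> (\<Sum>m\<in>I. card (height_box 3 m \<times> height_box 4 (3072 * N div m ^ 2)))"
    unfolding T_def by (rule card_UN_le[OF fI])
  also have "\<dots> \<le> (\<Sum>m\<in>I. (2 * m + 1) ^ 4 * (2 * (3072 * N div m ^ 2) + 1) ^ 5)"
    unfolding card_cartesian_product
    using height_box_finite_card(2)[of 3] height_box_finite_card(2)[of 4]
    by (intro sum_mono mult_le_mono) simp_all
  finally show ?thesis unfolding I_def .
qed

lemma card_square_factor_vectors: "real (card (square_factor_vectors N)) \<le> 162 * 6336 ^ 5 * real N ^ 5"
proof -
  define I where "I = {m::nat. 1 \<le> m \<and> m ^ 2 \<le> 192 * N}"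
  define c where "c = 81 * 6336 ^ 5 * real N ^ 5"
  have c0: "0 \<le> c" unfolding c_def by simp
  have "real (card (square_factor_vectors N))
          \<le> (\<Sum>m\<in>I. real ((2 * m + 1) ^ 4 * (2 * (3072 * N div m ^ 2) + 1) ^ 5))"
    using card_square_factor_vectors_sum[of N] unfolding I_def
    by (simp only: of_nat_le_iff of_nat_sum[symmetric])
  also have "\<dots> \<le> (\<Sum>m\<in>I. c * (1 / (real m)^2))"
    by (intro sum_mono) (use fiber_size_bound in \<open>auto simp: I_def c_def\<close>)
  also have "\<dots> \<le> (\<Sum>m\<in>{1..192 * N}. c * (1 / (real m)^2))"
    using positive_square_le_subset c0 unfolding I_def by (intro sum_mono2) auto
  also have "\<dots> = c * (\<Sum>m\<in>{1..192 * N}. 1 / (real m)^2)" by (simp add: sum_distrib_left)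
  also have "\<dots> \<le> c * 2"
  proof (rule mult_left_mono[OF _ c0])
    have "0 \<le> 1 / real (max (192 * N) 1)" by simp
    thus "(\<Sum>m\<in>{1..192 * N}. 1 / (real m)^2) \<le> 2"
      using sum_inverse_squares[of "192 * N"] by linarith
  qed
  finally show ?thesis unfolding c_def by simp
qed

(* Forms with f_0 = f_1 = 0 are divisible by x^2, which gives the lower bound. *)
lemma zero_prefix_in_D_set:
  assumes l: "l \<in> bounded_lists N 5" shows "0 # 0 # l \<in> D_set N"
proof -
  define G :: "int poly poly" where "G = Polynomial.monom (Polynomial.monom 1 1) 0"
  define K :: "int poly poly" where
    "K = (\<Sum>j<5. Polynomial.monom (Polynomial.monom (l ! j) j) (4 - j))"
  have G2: "G ^ 2 = Polynomial.monom (Polynomial.monom 1 2) 0"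
    unfolding G_def power2_eq_square by (simp add: mult_monom numeral_2_eq_2)
  have "sextic_form (0 # 0 # l) =
          (\<Sum>j<5. Polynomial.monom (Polynomial.monom (l ! j) (j + 2)) (4 - j))"
    unfolding sextic_form_def by (simp add: sum.lessThan_Suc_shift eval_nat_numeral)
  also have "\<dots> = G ^ 2 * K" unfolding G2 K_def
    by (simp add: sum_distrib_left mult_monom add.commute)
  finally have F: "sextic_form (0 # 0 # l) = G ^ 2 * K" .
  have "hom_form 1 G" unfolding hom_form_def G_def by (auto simp: coeff_monom split: if_splits)
  hence "nonconst_form G" unfolding nonconst_form_def G_def by auto
  hence "\<not> squarefree_form (sextic_form (0 # 0 # l))" unfolding squarefree_form_def F by auto
  moreover have "0 # 0 # l \<in> box N" using l unfolding box_eq_bounded_lists bounded_lists_def by auto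
  ultimately show ?thesis by (simp add: D_set_def)
qed

lemma D_set_finite: "finite (D_set N)"
  by (rule finite_subset[of _ "box N"]) (auto simp: D_set_def box_eq_bounded_lists bounded_lists_finite)

lemma card_D_set_lower: "real N ^ 5 \<le> real (card (D_set N))"
proof -
  have "(2 * N + 1) ^ 5 = card ((\<lambda>l. 0 # 0 # l) ` bounded_lists N 5)"
    by (subst card_image) (auto simp: inj_on_def card_bounded_lists)
  also have "\<dots> \<le> card (D_set N)"
    using zero_prefix_in_D_set D_set_finite by (intro card_mono) auto
  finally have "real ((2 * N + 1) ^ 5) \<le> real (card (D_set N))" by (simp only: of_nat_le_iff)
  moreover have "real N ^ 5 \<le> real ((2 * N + 1) ^ 5)" by (simp add: power_mono)
  ultimately show ?thesis by linarith
qed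

lemma D_set_cover:
  "D_set N \<subseteq> {replicate 7 0} \<union> (\<lambda>l. l @ [0, 0]) ` bounded_lists N 5 \<union> square_factor_vectors N"
proof
  fix fs assume fs: "fs \<in> D_set N"
  hence bx: "fs \<in> box N" by (simp add: D_set_def)
  hence len: "length fs = 7" and st: "set fs \<subseteq> {-int N..int N}"
    unfolding box_eq_bounded_lists bounded_lists_def by auto
  from not_squarefree_cases[OF len] fs consider "fs = replicate 7 0" | "fs ! 5 = 0 \<and> fs ! 6 = 0"
    | "dehom fs \<noteq> 0 \<and> (\<exists>g h. 1 \<le> degree g \<and> dehom fs = g ^ 2 * h)"
    by (auto simp: D_set_def)
  thus "fs \<in> {replicate 7 0} \<union> (\<lambda>l. l @ [0, 0]) ` bounded_lists N 5 \<union> square_factor_vectors N"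
  proof cases
    case 2
    have "fs = take 5 fs @ [0, 0]"
    proof (rule nth_equalityI)
      fix i assume "i < length fs"
      hence "i < 5 \<or> i = 5 \<or> i = 6" using len by auto
      thus "fs ! i = (take 5 fs @ [0, 0]) ! i" using 2 len by (auto simp: nth_append)
    qed (use len in simp)
    moreover have "take 5 fs \<in> bounded_lists N 5"
      using len st set_take_subset[of 5 fs] unfolding bounded_lists_def by auto
    ultimately show ?thesis by blast
  next
    case 3 thus ?thesis using bx by (simp add: square_factor_vectors_def)
  qed simp
qed

definition D_constant :: real where
  "D_constant = 244 + 162 * 6336 ^ 5"

lemma card_D_set_upper:
  assumes "1 \<le> N" shows "real (card (D_set N)) \<le> D_constant * real N ^ 5"
proof -
  define x where "x = real N"
  have x1: "1 \<le> x" using assms by (simp add: x_def)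
  have fin: "finite (square_factor_vectors N)"
    by (rule finite_subset[of _ "box N"])
       (auto simp: square_factor_vectors_def box_eq_bounded_lists bounded_lists_finite)
  have "card (D_set N) \<le> card ({replicate 7 0} \<union> (\<lambda>l. l @ [0, 0]) ` bounded_lists N 5) +
                          card (square_factor_vectors N)"
    using card_mono[OF _ D_set_cover] card_Un_le fin bounded_lists_finite
    by (meson finite.emptyI finite.insertI finite_UnI finite_imageI order_trans)
  also have "\<dots> \<le> 1 + (2 * N + 1) ^ 5 + card (square_factor_vectors N)"
    using card_Un_le[of "{replicate 7 0}" "(\<lambda>l. l @ [0, 0]) ` bounded_lists N 5"]
      card_image_le[OF bounded_lists_finite, of "\<lambda>l. l @ [0, 0]" N 5]
    by (simp add: card_bounded_lists)
  finally have "real (card (D_set N)) \<le> real (1 + (2 * N + 1) ^ 5 + card (square_factor_vectors N))"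
    by (simp only: of_nat_le_iff)
  also have "\<dots> = 1 + (2 * x + 1) ^ 5 + real (card (square_factor_vectors N))"
    by (simp add: x_def add.commute)
  also have "\<dots> \<le> 1 + (2 * x + 1) ^ 5 + 162 * 6336 ^ 5 * x ^ 5"
    using card_square_factor_vectors[of N] unfolding x_def by simp
  also have "\<dots> \<le> D_constant * x ^ 5"
  proof -
    have "(2 * x + 1) ^ 5 \<le> (3 * x) ^ 5" using x1 by (intro power_mono) auto
    moreover have "1 \<le> x ^ 5" using x1 by simp
    ultimately show ?thesis unfolding D_constant_def by (simp add: algebra_simps power_mult_distrib)
  qed
  finally show ?thesis unfolding x_def .
qed

lemma card_C_set: "real (card (C_set N)) = (2 * real N + 1) ^ 7 - real (card (D_set N))"
proof -
  have "C_set N = box N - D_set N" by (auto simp: C_set_def D_set_def)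
  moreover have "D_set N \<subseteq> box N" by (auto simp: D_set_def)
  ultimately have "card (C_set N) = card (box N) - card (D_set N)"
    by (simp add: card_Diff_subset D_set_finite)
  moreover have "card (D_set N) \<le> card (box N)"
    using \<open>D_set N \<subseteq> box N\<close> by (intro card_mono) (simp_all add: box_eq_bounded_lists bounded_lists_finite)
  ultimately show ?thesis
    by (simp add: of_nat_diff box_eq_bounded_lists card_bounded_lists add.commute)
qed

lemma seventh_power_increment:
  assumes "(x::real) \<ge> 1" shows "(2 * x + 1) ^ 7 - (2 * x) ^ 7 \<le> 2059 * x ^ 6"
proof -
  have expand: "(2 * x + 1) ^ 7 - (2 * x) ^ 7 =
          448 * x ^ 6 + 672 * x ^ 5 + 560 * x ^ 4 + 280 * x ^ 3 + 84 * x ^ 2 + 14 * x + 1"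
    by (simp add: eval_nat_numeral algebra_simps)
  have pow: "x ^ k \<le> x ^ 6" if "k \<le> 6" for k using assms that by (intro power_increasing) auto
  show ?thesis unfolding expand
    using pow[of 5] pow[of 4] pow[of 3] pow[of 2] pow[of 1, unfolded power_one_right]
      pow[of 0, unfolded power_0] by linarith
qed

lemma card_C_set_error:
  assumes "1 \<le> N"
  shows "\<bar>real (card (C_set N)) - (2 * real N) ^ 7\<bar> \<le> (2059 + D_constant) * real N ^ 6"
proof -
  define x where "x = real N"
  have x1: "1 \<le> x" using assms by (simp add: x_def)
  have "D_constant * x ^ 5 \<le> D_constant * x ^ 6"
    using x1 by (intro mult_left_mono power_increasing) (auto simp: D_constant_def)
  hence D: "real (card (D_set N)) \<le> D_constant * x ^ 6" using card_D_set_upper[OF assms] by (simp add: x_def)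
  have "(2 * x) ^ 7 \<le> (2 * x + 1) ^ 7" using x1 by (intro power_mono) auto
  thus ?thesis using D seventh_power_increment[OF x1] card_C_set[of N]
    unfolding x_def by (simp add: abs_le_iff algebra_simps)
qed

theorem mainTheorem4:
  shows "(\<exists>c1 c2 :: real. 0 < c1 \<and> c1 < c2 \<and>
            (\<forall>N::nat. N \<ge> 1 \<longrightarrow>
               c1 * real N ^ 5 \<le> real (card (D_set N)) \<and>
               real (card (D_set N)) \<le> c2 * real N ^ 5))
       \<and> (\<exists>C :: real. \<forall>N::nat. N \<ge> 1 \<longrightarrow>
            \<bar>real (card (C_set N)) - (2 * real N) ^ 7\<bar> \<le> C * (2 * real N) ^ 7 / real N)"
proof
  show "\<exists>c1 c2 :: real. 0 < c1 \<and> c1 < c2 \<and> (\<forall>N::nat. N \<ge> 1 \<longrightarrow>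
          c1 * real N ^ 5 \<le> real (card (D_set N)) \<and> real (card (D_set N)) \<le> c2 * real N ^ 5)"
    using card_D_set_lower card_D_set_upper
    by (intro exI[of _ 1] exI[of _ D_constant]) (auto simp: D_constant_def)
  have "(2059 + D_constant) * real N ^ 6 = (2059 + D_constant) / 128 * (2 * real N) ^ 7 / real N"
    if "1 \<le> N" for N using that by (simp add: field_simps power_mult_distrib eval_nat_numeral)
  thus "\<exists>C :: real. \<forall>N::nat. N \<ge> 1 \<longrightarrow>
          \<bar>real (card (C_set N)) - (2 * real N) ^ 7\<bar> \<le> C * (2 * real N) ^ 7 / real N"
    using card_C_set_error by (intro exI[of _ "(2059 + D_constant) / 128"]) auto
qed

end
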